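(* For the system $$u_{0,0}-v_{1,1}=0,\qquad (u_{1,0}-u_{0,0})(v_{1,0}-u_{0,0})-(u_{0,1}-u_{0,0})(v_{0,1}-u_{0,0})=0,$$ the following second order flow is a symmetry: $$\frac{\partial u_{0,0}}{\partial t_2}=\frac{u_{0,0}-v_{1,0}}{(u_{-1,0}-v_{1,0})^2}\left(\frac{u_{0,0}-u_{-1,0}}{v_{2,0}-u_{0,0}}+\frac{u_{-1,0}-v_{0,0}}{v_{0,0}-u_{-2,0}}+1\right),$$ $$\frac{\partial v_{0,0}}{\partial t_2}=\frac{u_{-1,0}-v_{0,0}}{(u_{-1,0}-v_{1,0})^2}\left(\frac{u_{0,0}-v_{1,0}}{v_{2,0}-u_{0,0}}+\frac{v_{1,0}-v_{0,0}}{v_{0,0}-u_{-2,0}}+1\right).$$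
   Context: Unknowns $u,v$ on $\mathbb Z^2$, $u_{i,j}=u(n+i,m+j)$, similarly $v$. Shifts $\mathcal S:n\mapsto n+1$, $\mathcal T:m\mapsto m+1$. For a quad system $\boldsymbol Q(\boldsymbol u_{0,0},\boldsymbol u_{1,0},\boldsymbol u_{0,1},\boldsymbol u_{1,1})=\boldsymbol 0$ with $\boldsymbol u=(u,v)$ and Jacobians $\mathrm Q_{(p,q)}=\partial\boldsymbol Q/\partial\boldsymbol u_{p,q}$, a vector function $\boldsymbol F=(F^{(1)},F^{(2)})$ of finitely many shifts of $\boldsymbol u$ is a symmetry, written $\partial_t u_{0,0}=F^{(1)}$, $\partial_t v_{0,0}=F^{(2)}$, if $\mathrm Q_{(0,0)}\boldsymbol F+\mathrm Q_{(1,0)}\mathcal S(\boldsymbol F)+\mathrm Q_{(0,1)}\mathcal T(\boldsymbol F)+\mathrm Q_{(1,1)}\mathcal S\mathcal T(\boldsymbol F)=\boldsymbol 0$ holds on all solutions of the system. *)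

theory Defs
  imports "HOL-Analysis.Analysis"
begin

type_synonym lattice_fun = "int \<Rightarrow> int \<Rightarrow> real"

type_synonym quad_args = "(real \<times> real) \<times> (real \<times> real) \<times> (real \<times> real) \<times> (real \<times> real)"

definition quad_point :: "lattice_fun \<Rightarrow> lattice_fun \<Rightarrow> int \<Rightarrow> int \<Rightarrow> quad_args" where
  "quad_point u v n m =
     ((u n m, v n m), (u (n+1) m, v (n+1) m), (u n (m+1), v n (m+1)), (u (n+1) (m+1), v (n+1) (m+1)))"

definition is_solution :: "(quad_args \<Rightarrow> real \<times> real) \<Rightarrow> lattice_fun \<Rightarrow> lattice_fun \<Rightarrow> bool" where
  "is_solution Q u v \<longleftrightarrow> (\<forall>n m. Q (quad_point u v n m) = (0, 0))"

text \<open>Linearised equation at (n,m):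
  Q_(0,0) F + Q_(1,0) S(F) + Q_(0,1) T(F) + Q_(1,1) ST(F) = 0, i.e. the derivative
  (Jacobian) of Q at the quad point applied to (F, S F, T F, S T F) vanishes.\<close>
definition linearized_eq ::
  "(quad_args \<Rightarrow> real \<times> real) \<Rightarrow> (lattice_fun \<Rightarrow> lattice_fun \<Rightarrow> int \<Rightarrow> int \<Rightarrow> real \<times> real)
     \<Rightarrow> lattice_fun \<Rightarrow> lattice_fun \<Rightarrow> int \<Rightarrow> int \<Rightarrow> bool" where
  "linearized_eq Q F u v n m \<longleftrightarrow>
     (\<exists>Q'. (Q has_derivative Q') (at (quad_point u v n m)) \<and>
       Q' (F u v n m, F u v (n+1) m, F u v n (m+1), F u v (n+1) (m+1)) = (0, 0))"

definition Qsys :: "quad_args \<Rightarrow> real \<times> real" where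
  "Qsys = (\<lambda>((u00, v00), (u10, v10), (u01, v01), (u11, v11)).
     (u00 - v11, (u10 - u00) * (v10 - u00) - (u01 - u00) * (v01 - u00)))"

text \<open>The second order flow (u_{i,0} = u (n+i) m etc.).\<close>
definition flow2 :: "lattice_fun \<Rightarrow> lattice_fun \<Rightarrow> int \<Rightarrow> int \<Rightarrow> real \<times> real" where
  "flow2 u v n m =
    (let u0 = u n m; um1 = u (n-1) m; um2 = u (n-2) m;
         v0 = v n m; v1 = v (n+1) m; v2 = v (n+2) m
     in ((u0 - v1) / (um1 - v1)^2 * ((u0 - um1) / (v2 - u0) + (um1 - v0) / (v0 - um2) + 1),
         (um1 - v0) / (um1 - v1)^2 * ((u0 - v1) / (v2 - u0) + (v1 - v0) / (v0 - um2) + 1)))"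

definition flow2_defined :: "lattice_fun \<Rightarrow> lattice_fun \<Rightarrow> int \<Rightarrow> int \<Rightarrow> bool" where
  "flow2_defined u v n m \<longleftrightarrow>
     u (n-1) m \<noteq> v (n+1) m \<and> v (n+2) m \<noteq> u n m \<and> v n m \<noteq> u (n-2) m"

end

theory Submission
  imports Defs
begin

text \<open>On a solution the upper row of \<open>v\<close> is the shifted lower row of \<open>u\<close>,
  \<open>v(n+1,m+1) = u(n,m)\<close>, so every quantity involved is a rational function of \<open>u\<close>, \<open>v\<close> on row \<open>m\<close>
  and \<open>u\<close> on row \<open>m+1\<close>, and these are tied together by the quad relations
  \<open>(u(i+1,m) - u(i,m)) (v(i+1,m) - u(i,m)) = (u(i,m+1) - u(i,m)) (u(i-1,m) - u(i,m))\<close>.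
  The first component of the linearised system, \<open>F\<^sub>1(n,m) = F\<^sub>2(n+1,m+1)\<close>, clears to a polynomial
  identity in the ideal of three consecutive quad relations. In the second component the
  contributions of the shifted flows \<open>S F\<close> and \<open>T F\<close> collapse, already at a single point and without
  using the system, to simple fractions; what remains clears to a member of the ideal of two quad
  relations.\<close>

definition Qsys_jacobian :: "quad_args \<Rightarrow> quad_args \<Rightarrow> real \<times> real" where
  "Qsys_jacobian = (\<lambda>((u00, v00), (u10, v10), (u01, v01), (u11, v11))
       ((du00, dv00), (du10, dv10), (du01, dv01), (du11, dv11)).
     (du00 - dv11,
      (du10 - du00) * (v10 - u00) + (u10 - u00) * (dv10 - du00)
        - (du01 - du00) * (v01 - u00) - (u01 - u00) * (dv01 - du00)))"

lemma Qsys_has_derivative: "(Qsys has_derivative Qsys_jacobian p) (at p)"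
  unfolding Qsys_def Qsys_jacobian_def case_prod_unfold
  by (auto intro!: derivative_eq_intros simp: algebra_simps)

lemma linearized_eq_QsysI:
  assumes "fst (F u v n m) = snd (F u v (n+1) (m+1))"
    and "(fst (F u v (n+1) m) - fst (F u v n m)) * (v (n+1) m - u n m)
       + (u (n+1) m - u n m) * (snd (F u v (n+1) m) - fst (F u v n m))
       - (fst (F u v n (m+1)) - fst (F u v n m)) * (v n (m+1) - u n m)
       - (u n (m+1) - u n m) * (snd (F u v n (m+1)) - fst (F u v n m)) = 0"
  shows "linearized_eq Qsys F u v n m"
  unfolding linearized_eq_def
proof (intro exI conjI)
  show "(Qsys has_derivative Qsys_jacobian (quad_point u v n m)) (at (quad_point u v n m))"
    by (rule Qsys_has_derivative)
  show "Qsys_jacobian (quad_point u v n m) (F u v n m, F u v (n+1) m, F u v n (m+1), F u v (n+1) (m+1)) = (0, 0)"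
    using assms unfolding Qsys_jacobian_def quad_point_def case_prod_unfold by simp
qed

lemma is_solution_Qsys_iff:
  "is_solution Qsys u v \<longleftrightarrow> (\<forall>i j. v (i+1) (j+1) = u i j \<and>
     (u (i+1) j - u i j) * (v (i+1) j - u i j) = (u i (j+1) - u i j) * (v i (j+1) - u i j))"
  unfolding is_solution_def Qsys_def quad_point_def by auto

lemma is_solution_Qsys_upper_v:
  assumes "is_solution Qsys u v"
  shows "v k (m+1) = u (k-1) m"
  using assms unfolding is_solution_Qsys_iff by (metis diff_add_cancel)

lemma is_solution_Qsys_relation:
  assumes "is_solution Qsys u v"
  shows "(u (i+1) j - u i j) * (v (i+1) j - u i j) = (u i (j+1) - u i j) * (u (i-1) j - u i j)"
  using assms unfolding is_solution_Qsys_iff by (metis diff_add_cancel)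

definition flow2_u :: "real \<Rightarrow> real \<Rightarrow> real \<Rightarrow> real \<Rightarrow> real \<Rightarrow> real \<Rightarrow> real" where
  "flow2_u u0 um1 um2 v0 v1 v2 =
     (u0 - v1) / (um1 - v1)^2 * ((u0 - um1) / (v2 - u0) + (um1 - v0) / (v0 - um2) + 1)"

definition flow2_v :: "real \<Rightarrow> real \<Rightarrow> real \<Rightarrow> real \<Rightarrow> real \<Rightarrow> real \<Rightarrow> real" where
  "flow2_v u0 um1 um2 v0 v1 v2 =
     (um1 - v0) / (um1 - v1)^2 * ((u0 - v1) / (v2 - u0) + (v1 - v0) / (v0 - um2) + 1)"

lemma flow2_eq:
  "flow2 u v n m =
     (flow2_u (u n m) (u (n-1) m) (u (n-2) m) (v n m) (v (n+1) m) (v (n+2) m),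
      flow2_v (u n m) (u (n-1) m) (u (n-2) m) (v n m) (v (n+1) m) (v (n+2) m))"
  unfolding flow2_def flow2_u_def flow2_v_def Let_def ..

lemma flow2_u_frac:
  assumes "um1 \<noteq> v1" "v2 \<noteq> u0" "v0 \<noteq> um2"
  shows "flow2_u u0 um1 um2 v0 v1 v2 =
    (u0 - v1) * ((u0 - um1) * (v0 - um2) + (um1 - um2) * (v2 - u0)) / ((um1 - v1)^2 * (v2 - u0) * (v0 - um2))"
proof -
  have "inverse (um1 - v1) * (um1 - v1) = 1" "inverse (v2 - u0) * (v2 - u0) = 1"
    "inverse (v0 - um2) * (v0 - um2) = 1"
    using assms by auto
  then show ?thesis
    unfolding flow2_u_def divide_inverse inverse_mult_distrib power2_eq_square by algebra
qed

lemma flow2_v_frac: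
  assumes "um1 \<noteq> v1" "v2 \<noteq> u0" "v0 \<noteq> um2"
  shows "flow2_v u0 um1 um2 v0 v1 v2 =
    (um1 - v0) * ((u0 - v1) * (v0 - um2) + (v1 - um2) * (v2 - u0)) / ((um1 - v1)^2 * (v2 - u0) * (v0 - um2))"
proof -
  have "inverse (um1 - v1) * (um1 - v1) = 1" "inverse (v2 - u0) * (v2 - u0) = 1"
    "inverse (v0 - um2) * (v0 - um2) = 1"
    using assms by auto
  then show ?thesis
    unfolding flow2_v_def divide_inverse inverse_mult_distrib power2_eq_square by algebra
qed

lemma flow2_u_v_combination_S:
  assumes "um1 \<noteq> v1" "v2 \<noteq> u0" "v0 \<noteq> um2"
  shows "flow2_u u0 um1 um2 v0 v1 v2 * (v0 - um1) + (u0 - um1) * flow2_v u0 um1 um2 v0 v1 v2 =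
    - (v0 - um1) * (u0 - um2) / ((v1 - um1) * (v0 - um2))"
proof -
  have "inverse (um1 - v1) * (um1 - v1) = 1" "inverse (v1 - um1) * (v1 - um1) = 1"
    "inverse (v2 - u0) * (v2 - u0) = 1" "inverse (v0 - um2) * (v0 - um2) = 1"
    using assms by auto
  then show ?thesis
    unfolding flow2_u_def flow2_v_def divide_inverse inverse_mult_distrib power2_eq_square by algebra
qed

lemma flow2_u_v_combination_T:
  assumes "um1 \<noteq> v1" "v2 \<noteq> u0" "v0 \<noteq> um2"
  shows "(v1 - v0) * flow2_u u0 um1 um2 v0 v1 v2 - (u0 - v1) * flow2_v u0 um1 um2 v0 v1 v2 =
    (u0 - v1) * (v2 - v0) / ((v1 - um1) * (v2 - u0))"
proof -
  have "inverse (um1 - v1) * (um1 - v1) = 1" "inverse (v1 - um1) * (v1 - um1) = 1"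
    "inverse (v2 - u0) * (v2 - u0) = 1" "inverse (v0 - um2) * (v0 - um2) = 1"
    using assms by auto
  then show ?thesis
    unfolding flow2_u_def flow2_v_def divide_inverse inverse_mult_distrib power2_eq_square by algebra
qed

text \<open>In the next two lemmas \<open>a\<^sub>k = v(n+k-1,m)\<close>, \<open>b\<^sub>k = u(n+k-2,m)\<close> and \<open>c\<^sub>k = u(n+k-2,m+1)\<close>;
  the equations assumed are the quad relations at \<open>n-1\<close>, \<open>n\<close>, \<open>n+1\<close>.\<close>

lemma flow2_u_eq_flow2_v_diagonal:
  fixes a1 a2 a3 b0 b1 b2 b3 b4 c1 c2 c3 :: real
  assumes "(b2 - b1) * (a1 - b1) = (c1 - b1) * (b0 - b1)"
    and "(b3 - b2) * (a2 - b2) = (c2 - b2) * (b1 - b2)"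
    and "(b4 - b3) * (a3 - b3) = (c3 - b3) * (b2 - b3)"
    and "b1 \<noteq> a2" "a3 \<noteq> b2" "a1 \<noteq> b0" "c2 \<noteq> b3" "b4 \<noteq> c3" "b2 \<noteq> c1"
  shows "flow2_u b2 b1 b0 a1 a2 a3 = flow2_v c3 c2 c1 b2 b3 b4"
proof -
  have "(b2 - a2) * ((b2 - b1) * (a1 - b0) + (b1 - b0) * (a3 - b2)) * ((c2 - b3)^2 * (b4 - c3) * (b2 - c1))
      = (c2 - b2) * ((c3 - b3) * (b2 - c1) + (b3 - c1) * (b4 - c3)) * ((b1 - a2)^2 * (a3 - b2) * (a1 - b0))"
    using assms(1-3) by algebra
  then show ?thesis
    using assms(4-) by (simp add: flow2_u_frac flow2_v_frac frac_eq_eq)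
qed

lemma flow2_linearized_identity:
  fixes a1 a2 a3 a4 b0 b1 b2 b3 c0 c1 c2 :: real
  assumes "(b2 - b1) * (a1 - b1) = (c1 - b1) * (b0 - b1)"
    and "(b3 - b2) * (a2 - b2) = (c2 - b2) * (b1 - b2)"
    and nz: "b1 \<noteq> a2" "a3 \<noteq> b2" "a1 \<noteq> b0" "a4 \<noteq> b3" "c1 \<noteq> b2" "b3 \<noteq> c2" "b1 \<noteq> c0"
  defines "A \<equiv> flow2_u b2 b1 b0 a1 a2 a3"
    and "B\<^sub>u \<equiv> flow2_u b3 b2 b1 a2 a3 a4" and "B\<^sub>v \<equiv> flow2_v b3 b2 b1 a2 a3 a4"
    and "C\<^sub>u \<equiv> flow2_u c2 c1 c0 b1 b2 b3" and "C\<^sub>v \<equiv> flow2_v c2 c1 c0 b1 b2 b3"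
  shows "(B\<^sub>u - A) * (a2 - b2) + (b3 - b2) * (B\<^sub>v - A) - (C\<^sub>u - A) * (b1 - b2) - (c2 - b2) * (C\<^sub>v - A) = 0"
proof -
  have "(b2 - a2) * ((b2 - b1) * (a1 - b0) + (b1 - b0) * (a3 - b2)) * (c2 - a2 - b3 + b1) * (b2 - c1) * (b3 - c2)
      - (a2 - b2) * (b3 - b1) * (a2 - b1) * (a1 - b0) * (b2 - c1) * (b3 - c2)
      + (c2 - b2) * (b3 - b1) * (a3 - b2) * (a2 - b1)^2 * (a1 - b0) = 0"
    using assms(1,2) by algebra
  moreover have "inverse (b1 - a2) * (b1 - a2) = 1" "inverse (a2 - b1) * (a2 - b1) = 1"
    "inverse (a3 - b2) * (a3 - b2) = 1" "inverse (a1 - b0) * (a1 - b0) = 1"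
    "inverse (b3 - c2) * (b3 - c2) = 1" "inverse (b2 - c1) * (b2 - c1) = 1"
    using nz by auto
  ultimately have "A * (c2 - a2 - b3 + b1) - (a2 - b2) * (b3 - b1) / ((a3 - b2) * (a2 - b1))
      + (c2 - b2) * (b3 - b1) / ((b2 - c1) * (b3 - c2)) = 0"
    unfolding A_def flow2_u_frac[OF nz(1-3)] divide_inverse inverse_mult_distrib power2_eq_square
    by algebra
  moreover have "B\<^sub>u * (a2 - b2) + (b3 - b2) * B\<^sub>v = - (a2 - b2) * (b3 - b1) / ((a3 - b2) * (a2 - b1))"
    unfolding B\<^sub>u_def B\<^sub>v_def using nz by (intro flow2_u_v_combination_S) auto
  moreover have "(b2 - b1) * C\<^sub>u - (c2 - b2) * C\<^sub>v = (c2 - b2) * (b3 - b1) / ((b2 - c1) * (b3 - c2))"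
    unfolding C\<^sub>u_def C\<^sub>v_def using nz by (intro flow2_u_v_combination_T) auto
  ultimately show ?thesis by algebra
qed

lemma flow2_fst_eq_snd_diagonal:
  assumes sol: "is_solution Qsys u v"
    and "flow2_defined u v n m" "flow2_defined u v (n+1) (m+1)"
  shows "fst (flow2 u v n m) = snd (flow2 u v (n+1) (m+1))"
proof -
  note rel = is_solution_Qsys_relation[OF sol] and upper = is_solution_Qsys_upper_v[OF sol]
  have idx: "n - 1 + 1 = n" "n - 1 - 1 = n - 2" "n + 1 - 1 = n" "n + 1 - 2 = n - 1"
    "n + 1 + 1 = n + 2" "n + 1 + 2 = n + 3" "n + 2 - 1 = n + 1" "n + 3 - 1 = n + 2"
    by simp_all
  have "flow2_u (u n m) (u (n-1) m) (u (n-2) m) (v n m) (v (n+1) m) (v (n+2) m)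
      = flow2_v (u (n+1) (m+1)) (u n (m+1)) (u (n-1) (m+1)) (u n m) (u (n+1) m) (u (n+2) m)"
    using rel[of "n-1" m] rel[of n m] rel[of "n+1" m] assms(2,3)
    by (intro flow2_u_eq_flow2_v_diagonal) (auto simp: flow2_defined_def upper idx)
  then show ?thesis by (simp add: flow2_eq upper idx)
qed

lemma flow2_linearized_second_component:
  assumes sol: "is_solution Qsys u v"
    and "flow2_defined u v n m" "flow2_defined u v (n+1) m" "flow2_defined u v n (m+1)"
  shows "(fst (flow2 u v (n+1) m) - fst (flow2 u v n m)) * (v (n+1) m - u n m)
       + (u (n+1) m - u n m) * (snd (flow2 u v (n+1) m) - fst (flow2 u v n m))
       - (fst (flow2 u v n (m+1)) - fst (flow2 u v n m)) * (v n (m+1) - u n m)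
       - (u n (m+1) - u n m) * (snd (flow2 u v n (m+1)) - fst (flow2 u v n m)) = 0"
proof -
  note rel = is_solution_Qsys_relation[OF sol] and upper = is_solution_Qsys_upper_v[OF sol]
  have idx: "n - 1 + 1 = n" "n - 1 - 1 = n - 2" "n + 1 - 1 = n" "n + 1 - 2 = n - 1"
    "n + 1 + 1 = n + 2" "n + 1 + 2 = n + 3" "n + 2 - 1 = n + 1"
    by simp_all
  show ?thesis
    using rel[of "n-1" m] rel[of n m] assms(2-4)
    unfolding flow2_eq fst_conv snd_conv upper idx
    by (intro flow2_linearized_identity) (auto simp: flow2_defined_def upper idx)
qed

theorem mainTheorem9:
  fixes u v :: lattice_fun and n m :: int
  assumes "is_solution Qsys u v"
    and "flow2_defined u v n m" and "flow2_defined u v (n+1) m"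
    and "flow2_defined u v n (m+1)" and "flow2_defined u v (n+1) (m+1)"
  shows "linearized_eq Qsys flow2 u v n m"
  using assms
  by (intro linearized_eq_QsysI flow2_fst_eq_snd_diagonal flow2_linearized_second_component)

end
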